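(* Let $\mathcal{M}_R$ be a rule that assigns a probability $\mathcal{M}_R(r;F)\in[0,1]$ to each root $r$ of every forest $F\in\mathcal{F}^N$. Then there is at most one incentive-compatible selection mechanism $\mathcal{M}$ such that $\mathcal{M}(r;F)=\mathcal{M}_R(r;F)$ for every forest $F$ and every root $r$ of $F$.
   Context: Let $N$ be a finite set of vertices. A directed forest on $N$ is a directed acyclic graph on $N$ with every out-degree at most $1$; $\mathcal{F}^N$ is the set of such forests; roots are vertices with no out-edge. A selection mechanism is a function $\mathcal{M}:N\times\mathcal{F}^N\to[0,1]$ with $\sum_x\mathcal{M}(x;F)\le1$ for all $F$. It is incentive-compatible if $\mathcal{M}(x;F)=\mathcal{M}(x;F')$ whenever $F,F'$ differ only in the out-edge of $x$. *)

theory Defs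
  imports Complex_Main
begin

definition forest :: "'a set \<Rightarrow> ('a \<times> 'a) set \<Rightarrow> bool" where
  "forest N F \<longleftrightarrow> F \<subseteq> N \<times> N \<and> acyclic F \<and>
     (\<forall>x y z. (x, y) \<in> F \<longrightarrow> (x, z) \<in> F \<longrightarrow> y = z)"

definition forests :: "'a set \<Rightarrow> ('a \<times> 'a) set set" where
  "forests N = {F. forest N F}"

definition roots :: "'a set \<Rightarrow> ('a \<times> 'a) set \<Rightarrow> 'a set" where
  "roots N F = {x \<in> N. \<forall>y. (x, y) \<notin> F}"

definition selection_mechanism :: "'a set \<Rightarrow> ('a \<Rightarrow> ('a \<times> 'a) set \<Rightarrow> real) \<Rightarrow> bool" where
  "selection_mechanism N M \<longleftrightarrow>
     (\<forall>F \<in> forests N. (\<forall>x \<in> N. 0 \<le> M x F \<and> M x F \<le> 1) \<and> (\<Sum>x\<in>N. M x F) \<le> 1)"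

definition differ_only_at :: "'a \<Rightarrow> ('a \<times> 'a) set \<Rightarrow> ('a \<times> 'a) set \<Rightarrow> bool" where
  "differ_only_at x F F' \<longleftrightarrow> {e \<in> F. fst e \<noteq> x} = {e \<in> F'. fst e \<noteq> x}"

definition incentive_compatible :: "'a set \<Rightarrow> ('a \<Rightarrow> ('a \<times> 'a) set \<Rightarrow> real) \<Rightarrow> bool" where
  "incentive_compatible N M \<longleftrightarrow>
     (\<forall>x \<in> N. \<forall>F \<in> forests N. \<forall>F' \<in> forests N.
        differ_only_at x F F' \<longrightarrow> M x F = M x F')"

end

theory Submission
  imports Defs
begin

(* Deleting the out-edge of x yields a forest in which x is a root and which differs
   from the original only at x.  Incentive compatibility therefore fixes the probability
   of x to its value at that root, where the prescribed root rule determines it. *)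

definition remove_out_edge :: "'a \<Rightarrow> ('a \<times> 'a) set \<Rightarrow> ('a \<times> 'a) set" where
  "remove_out_edge x F = {e \<in> F. fst e \<noteq> x}"

lemma remove_out_edge_subset: "remove_out_edge x F \<subseteq> F"
  unfolding remove_out_edge_def by auto

lemma forest_remove_out_edge:
  assumes "F \<in> forests N"
  shows "remove_out_edge x F \<in> forests N"
  using assms remove_out_edge_subset[of x F] acyclic_subset[of F "remove_out_edge x F"]
  unfolding forests_def forest_def by blast

lemma root_remove_out_edge:
  assumes "x \<in> N"
  shows "x \<in> roots N (remove_out_edge x F)"
  using assms unfolding roots_def remove_out_edge_def by auto

lemma differ_only_at_remove_out_edge: "differ_only_at x F (remove_out_edge x F)"
  unfolding differ_only_at_def remove_out_edge_def by simp

lemma incentive_compatible_remove_out_edge: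
  assumes "incentive_compatible N M" and "F \<in> forests N" and "x \<in> N"
  shows "M x F = M x (remove_out_edge x F)"
  using assms forest_remove_out_edge[OF assms(2), of x] differ_only_at_remove_out_edge[of x F]
  unfolding incentive_compatible_def by blast

lemma incentive_compatible_eq_if_eq_on_roots:
  assumes "incentive_compatible N M1" and "incentive_compatible N M2"
    and "\<forall>F \<in> forests N. \<forall>r \<in> roots N F. M1 r F = M2 r F"
    and "F \<in> forests N" and "x \<in> N"
  shows "M1 x F = M2 x F"
proof -
  let ?F' = "remove_out_edge x F"
  have "M1 x ?F' = M2 x ?F'"
    using assms(3) forest_remove_out_edge[OF assms(4)] root_remove_out_edge[OF assms(5)] by simp
  then show ?thesis
    using incentive_compatible_remove_out_edge[OF assms(1,4,5)]
      incentive_compatible_remove_out_edge[OF assms(2,4,5)] by simp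
qed

theorem corollary1:
  fixes N :: "'a set"
    and MR M1 M2 :: "'a \<Rightarrow> ('a \<times> 'a) set \<Rightarrow> real"
  assumes "finite N"
    and "\<forall>F \<in> forests N. \<forall>r \<in> roots N F. 0 \<le> MR r F \<and> MR r F \<le> 1"
    and "selection_mechanism N M1" and "incentive_compatible N M1"
    and "\<forall>F \<in> forests N. \<forall>r \<in> roots N F. M1 r F = MR r F"
    and "selection_mechanism N M2" and "incentive_compatible N M2"
    and "\<forall>F \<in> forests N. \<forall>r \<in> roots N F. M2 r F = MR r F"
  shows "\<forall>F \<in> forests N. \<forall>x \<in> N. M1 x F = M2 x F"
proof -
  have "\<forall>F \<in> forests N. \<forall>r \<in> roots N F. M1 r F = M2 r F"
    using assms(5,8) by simp
  then show ?thesis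
    using incentive_compatible_eq_if_eq_on_roots[OF assms(4,7)] by simp
qed

end
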